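(* Let $s\ge2$ and let $G$ be a $K_{2,s}$-free graph. Then $G$ is strongly $d$-degenerate, where $d=d(G):=\lfloor 2s\,\nabla_1(G)\rfloor$.
   Context: A graph $H$ is a shallow minor of $G$ at depth $r$ (integer $r\ge0$) if there are disjoint sets $V_1,\dots,V_p\subseteq V(G)$ such that each $G[V_i]$ contains a vertex $x_i$ with every vertex of $V_i$ at distance at most $r$ from $x_i$ in $G[V_i]$, and $H$ is (isomorphic to) a subgraph of the graph obtained by contracting each $V_i$ to a single vertex (two contracted vertices adjacent iff some edge joins the corresponding sets). $\nabla_r(G)$ is the maximum of $e(H)/v(H)$ over all non-empty shallow minors $H$ of $G$ at depth $r$. A graph is $K_{2,s}$-free if it has no subgraph isomorphic to $K_{2,s}$. For an integer $d\ge1$, a vertex $v$ of $G$ is $d$-removable in $G$ if $d_G(v)\le d$ and at most one neighbour $w$ of $v$ has $d_G(w)>d$; $G$ is strongly $d$-degenerate if every non-empty subgraph $G'$ of $G$ contains a vertex $d$-removable in $G'$. *)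

theory Defs
  imports Complex_Main
begin

definition sgraph :: "'a set \<Rightarrow> ('a \<Rightarrow> 'a \<Rightarrow> bool) \<Rightarrow> bool" where
  "sgraph V E \<longleftrightarrow> finite V \<and> (\<forall>x y. E x y \<longrightarrow> x \<in> V \<and> y \<in> V \<and> x \<noteq> y \<and> E y x)"

definition subgraph :: "'a set \<Rightarrow> ('a \<Rightarrow> 'a \<Rightarrow> bool) \<Rightarrow> 'a set \<Rightarrow> ('a \<Rightarrow> 'a \<Rightarrow> bool) \<Rightarrow> bool" where
  "subgraph V' E' V E \<longleftrightarrow> sgraph V' E' \<and> V' \<subseteq> V \<and> (\<forall>x y. E' x y \<longrightarrow> E x y)"

definition degree :: "'a set \<Rightarrow> ('a \<Rightarrow> 'a \<Rightarrow> bool) \<Rightarrow> 'a \<Rightarrow> nat" where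
  "degree V E v = card {w \<in> V. E v w}"

definition num_edges :: "('a \<Rightarrow> 'a \<Rightarrow> bool) \<Rightarrow> nat" where
  "num_edges E = card {{x, y} | x y. E x y}"

definition K2s_free :: "nat \<Rightarrow> 'a set \<Rightarrow> ('a \<Rightarrow> 'a \<Rightarrow> bool) \<Rightarrow> bool" where
  "K2s_free s V E \<longleftrightarrow>
     \<not> (\<exists>a b S. a \<in> V \<and> b \<in> V \<and> a \<noteq> b \<and> S \<subseteq> V - {a, b} \<and> card S = s \<and> finite S \<and>
              (\<forall>x\<in>S. E a x \<and> E b x))"

definition dist_le :: "'a set \<Rightarrow> ('a \<Rightarrow> 'a \<Rightarrow> bool) \<Rightarrow> 'a \<Rightarrow> 'a \<Rightarrow> nat \<Rightarrow> bool" where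
  "dist_le S E c v r \<longleftrightarrow> (\<exists>xs. xs \<noteq> [] \<and> hd xs = c \<and> last xs = v \<and> set xs \<subseteq> S \<and>
      length xs \<le> r + 1 \<and> (\<forall>i. Suc i < length xs \<longrightarrow> E (xs ! i) (xs ! Suc i)))"

text \<open>A shallow minor at depth r, given by a set C of branch-set centres, the branch sets B c
  (c \<in> C), and the minor H = (W, F): W a non-empty set of centres, F a subset of the edges
  of the contracted graph on W. Branch sets are labelled by their centres (they are disjoint).\<close>
definition shallow_minor_data ::
  "nat \<Rightarrow> 'a set \<Rightarrow> ('a \<Rightarrow> 'a \<Rightarrow> bool) \<Rightarrow> 'a set \<Rightarrow> ('a \<Rightarrow> 'a set) \<Rightarrow> 'a set \<Rightarrow> ('a \<Rightarrow> 'a \<Rightarrow> bool) \<Rightarrow> bool" where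
  "shallow_minor_data r V E C B W F \<longleftrightarrow>
     (\<forall>c\<in>C. c \<in> B c \<and> B c \<subseteq> V \<and> (\<forall>v\<in>B c. dist_le (B c) E c v r)) \<and>
     (\<forall>c\<in>C. \<forall>c'\<in>C. c \<noteq> c' \<longrightarrow> B c \<inter> B c' = {}) \<and>
     W \<subseteq> C \<and> W \<noteq> {} \<and> sgraph W F \<and>
     (\<forall>c c'. F c c' \<longrightarrow> (\<exists>x\<in>B c. \<exists>y\<in>B c'. E x y))"

definition nabla :: "nat \<Rightarrow> 'a set \<Rightarrow> ('a \<Rightarrow> 'a \<Rightarrow> bool) \<Rightarrow> real" where
  "nabla r V E = Max {real (num_edges F) / real (card W) | C B W F. shallow_minor_data r V E C B W F}"

definition d_removable :: "nat \<Rightarrow> 'a set \<Rightarrow> ('a \<Rightarrow> 'a \<Rightarrow> bool) \<Rightarrow> 'a \<Rightarrow> bool" where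
  "d_removable d V E v \<longleftrightarrow> v \<in> V \<and> degree V E v \<le> d \<and>
     card {w \<in> V. E v w \<and> degree V E w > d} \<le> 1"

definition strongly_degenerate :: "nat \<Rightarrow> 'a set \<Rightarrow> ('a \<Rightarrow> 'a \<Rightarrow> bool) \<Rightarrow> bool" where
  "strongly_degenerate d V E \<longleftrightarrow>
     (\<forall>V' E'. subgraph V' E' V E \<and> V' \<noteq> {} \<longrightarrow> (\<exists>v\<in>V'. d_removable d V' E' v))"

end

theory Submission
  imports Defs
begin

(* Let G' be a subgraph without d-removable vertex and H the set of its vertices of degree > d.
   Every other vertex w has degree <= d and therefore at least two neighbours p w, q w in H.
   Contracting the stars {x} + {w. p w = x} (x in H) gives a depth-1 minor of G on H.
   For x in H, send the neighbour w of x to w if w is in H, else to p w, or to q w if p w = x;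
   this is a minor neighbour y of x, and it is hit only by y itself and by common neighbours of
   x and y, of which K_{2,s}-freeness allows fewer than s. Summing over H,
   (d + 1) |H| <= sum of degrees <= 2 s e(minor) <= 2 s nabla_1(G) |H|,
   which contradicts d = floor (2 s nabla_1(G)). *)

lemma sgraphD:
  assumes "sgraph V E"
  shows "finite V" and "E x y \<Longrightarrow> x \<noteq> y" and "E x y \<Longrightarrow> E y x"
  using assms unfolding sgraph_def by blast+

lemma card_le_mult_card_image:
  assumes "finite A" and "\<And>y. y \<in> f ` A \<Longrightarrow> card {x \<in> A. f x = y} \<le> k"
  shows "card A \<le> card (f ` A) * k"
proof -
  have "card A = (\<Sum>y\<in>f ` A. card {x \<in> A. f x = y})"
    unfolding card_eq_sum by (rule sum.image_gen[OF assms(1)])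
  also have "\<dots> \<le> (\<Sum>y\<in>f ` A. k)"
    using assms(2) by (rule sum_mono)
  finally show ?thesis by simp
qed

lemma sum_degree_le_twice_num_edges:
  assumes "sgraph W F"
  shows "(\<Sum>x\<in>W. degree W F x) \<le> 2 * num_edges F"
proof -
  define arcs where "arcs = Sigma W (\<lambda>x. {y \<in> W. F x y})"
  define ends where "ends p = {fst p, snd p}" for p :: "'a \<times> 'a"
  have fin: "finite W"
    using sgraphD(1)[OF assms] .
  have edges: "ends ` arcs = {{x, y} | x y. F x y}"
    using assms unfolding arcs_def ends_def sgraph_def by force
  have "(\<Sum>x\<in>W. degree W F x) = card arcs"
    unfolding degree_def arcs_def using fin by (simp add: card_SigmaI)
  also have "\<dots> \<le> num_edges F * 2"
    unfolding num_edges_def edges[symmetric]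
  proof (rule card_le_mult_card_image)
    show "finite arcs" using fin by (simp add: arcs_def)
    fix e assume "e \<in> ends ` arcs"
    then obtain a b where e: "e = {a, b}" by (auto simp: ends_def)
    have "{p \<in> arcs. ends p = e} \<subseteq> {(a, b), (b, a)}"
      unfolding e ends_def by (auto simp: doubleton_eq_iff)
    then have "card {p \<in> arcs. ends p = e} \<le> card {(a, b), (b, a)}"
      by (intro card_mono) simp_all
    also have "\<dots> \<le> 2"
      by (simp add: card_insert_le_m1)
    finally show "card {p \<in> arcs. ends p = e} \<le> 2" .
  qed
  finally show ?thesis by simp
qed

lemma finite_shallow_minor_densities:
  assumes "finite V"
  shows "finite {real (num_edges F) / real (card W) | C B W F. shallow_minor_data r V E C B W F}"
proof -
  have "{real (num_edges F) / real (card W) | C B W F. shallow_minor_data r V E C B W F}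
     \<subseteq> (\<lambda>(m, k). real m / real k) ` ({..(2::nat) ^ card V} \<times> {..card V})"
  proof clarify
    fix C B W F assume minor: "shallow_minor_data r V E C B W F"
    then have WV: "W \<subseteq> V" and "sgraph W F"
      unfolding shallow_minor_data_def by blast+
    then have "{{x, y} | x y. F x y} \<subseteq> Pow W"
      unfolding sgraph_def by blast
    then have "num_edges F \<le> card (Pow W)"
      unfolding num_edges_def using assms WV by (intro card_mono) (auto intro: finite_subset)
    also have "\<dots> \<le> 2 ^ card V"
      using card_mono[OF assms WV] assms WV by (simp add: card_Pow finite_subset power_increasing)
    finally have "num_edges F \<le> 2 ^ card V" .
    moreover have "card W \<le> card V"
      using card_mono[OF assms WV] .
    ultimately show "real (num_edges F) / real (card W)
        \<in> (\<lambda>(m, k). real m / real k) ` ({..(2::nat) ^ card V} \<times> {..card V})"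
      by (intro image_eqI[where x = "(num_edges F, card W)"]) auto
  qed
  then show ?thesis
    by (rule finite_subset) auto
qed

lemma density_le_nabla:
  assumes "finite V" and "shallow_minor_data r V E C B W F"
  shows "real (num_edges F) / real (card W) \<le> nabla r V E"
  unfolding nabla_def
  by (rule Max_ge[OF finite_shallow_minor_densities[OF assms(1)]]) (use assms(2) in blast)

lemma le_nabla_if_dense_minor:
  assumes "finite V" and minor: "shallow_minor_data r V E C B W F"
    and dense: "k * card W \<le> m * num_edges F"
  shows "real k \<le> real m * nabla r V E"
proof -
  have "W \<noteq> {}" "sgraph W F"
    using minor unfolding shallow_minor_data_def by blast+
  then have "real (card W) > 0"
    using sgraphD(1) by (simp add: card_gt_0_iff)
  moreover have "real k * real (card W) \<le> real m * real (num_edges F)"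
    using dense by (metis of_nat_le_iff of_nat_mult)
  ultimately have "real k \<le> real m * (real (num_edges F) / real (card W))"
    by (simp add: field_simps)
  also have "\<dots> \<le> real m * nabla r V E"
    using density_le_nabla[OF assms(1) minor] by (intro mult_left_mono) simp_all
  finally show ?thesis .
qed

lemma dist_le_mono:
  assumes "\<And>x y. E' x y \<Longrightarrow> E x y" and "dist_le S E' c v r"
  shows "dist_le S E c v r"
  using assms unfolding dist_le_def by blast

lemma shallow_minor_data_subgraph:
  assumes "subgraph V' E' V E" and minor: "shallow_minor_data r V' E' C B W F"
  shows "shallow_minor_data r V E C B W F"
proof -
  have V'V: "V' \<subseteq> V" and E'E: "\<And>x y. E' x y \<Longrightarrow> E x y"
    using assms(1) unfolding subgraph_def by blast+
  have "c \<in> B c \<and> B c \<subseteq> V \<and> (\<forall>v\<in>B c. dist_le (B c) E c v r)" if "c \<in> C" for c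
    using minor that V'V dist_le_mono[of E' E, OF E'E] unfolding shallow_minor_data_def
    by (metis subset_trans)
  moreover have "\<exists>x\<in>B c. \<exists>y\<in>B c'. E x y" if "F c c'" for c c'
    using minor that E'E unfolding shallow_minor_data_def by metis
  ultimately show ?thesis
    using minor unfolding shallow_minor_data_def by auto
qed

lemma K2s_free_subgraph:
  assumes "subgraph V' E' V E" and "K2s_free s V E"
  shows "K2s_free s V' E'"
  unfolding K2s_free_def
proof (intro notI, elim exE conjE)
  fix a b S
  assume "a \<in> V'" "b \<in> V'" "a \<noteq> b" "S \<subseteq> V' - {a, b}" "card S = s" "finite S"
    and "\<forall>x\<in>S. E' a x \<and> E' b x"
  moreover have "V' \<subseteq> V" and "\<And>x y. E' x y \<Longrightarrow> E x y"
    using assms(1) unfolding subgraph_def by blast+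
  ultimately have "a \<in> V" "b \<in> V" "S \<subseteq> V - {a, b}" "\<forall>x\<in>S. E a x \<and> E b x"
    by blast+
  then show False
    using assms(2) \<open>a \<noteq> b\<close> \<open>card S = s\<close> \<open>finite S\<close> unfolding K2s_free_def by blast
qed

lemma K2s_free_common_neighbours:
  assumes G: "sgraph V E" and "K2s_free s V E" and "a \<in> V" "b \<in> V" "a \<noteq> b"
  shows "card {w \<in> V. E a w \<and> E b w} < s"
proof (rule ccontr)
  assume "\<not> ?thesis"
  then obtain S where S: "S \<subseteq> {w \<in> V. E a w \<and> E b w}" "card S = s"
    by (meson not_less obtain_subset_with_card_n)
  then have "finite S" "S \<subseteq> V - {a, b}"
    using sgraphD(1,2)[OF G] by (auto intro: finite_subset)
  then show False
    using assms S unfolding K2s_free_def by blast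
qed

definition star_branch :: "'a set \<Rightarrow> ('a \<Rightarrow> 'a) \<Rightarrow> 'a \<Rightarrow> 'a set" where
  "star_branch L p x = insert x {w \<in> L. p w = x}"

definition contraction ::
  "('a \<Rightarrow> 'a \<Rightarrow> bool) \<Rightarrow> ('a \<Rightarrow> 'a set) \<Rightarrow> 'a set \<Rightarrow> 'a \<Rightarrow> 'a \<Rightarrow> bool" where
  "contraction E B W x y \<longleftrightarrow> x \<in> W \<and> y \<in> W \<and> x \<noteq> y \<and> (\<exists>a\<in>B x. \<exists>b\<in>B y. E a b)"

lemma sgraph_contraction:
  assumes "sgraph V E" and "finite W"
  shows "sgraph W (contraction E B W)"
  using assms unfolding sgraph_def contraction_def by blast

lemma star_contraction_shallow_minor:
  assumes G: "sgraph V E" and "H \<subseteq> V" "H \<noteq> {}" and p: "\<And>w. w \<in> V - H \<Longrightarrow> E w (p w)"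
  shows "shallow_minor_data 1 V E H (star_branch (V - H) p) H
           (contraction E (star_branch (V - H) p) H)"
proof -
  let ?B = "star_branch (V - H) p"
  have depth: "dist_le (?B c) E c v 1" if "c \<in> H" "v \<in> ?B c" for c v
  proof (cases "v = c")
    case True
    then show ?thesis
      using that unfolding dist_le_def star_branch_def by (intro exI[of _ "[c]"]) auto
  next
    case False
    then have "v \<in> V - H" "p v = c"
      using that(2) by (auto simp: star_branch_def)
    then have "E c v"
      using p sgraphD(3)[OF G] by blast
    then show ?thesis
      using that unfolding dist_le_def star_branch_def
      by (intro exI[of _ "[c, v]"]) (auto simp: nth_Cons split: nat.splits)
  qed
  have "finite H"
    using sgraphD(1)[OF G] \<open>H \<subseteq> V\<close> by (rule finite_subset[rotated])
  then show ?thesis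
    using depth sgraph_contraction[OF G] \<open>H \<subseteq> V\<close> \<open>H \<noteq> {}\<close>
    unfolding shallow_minor_data_def by (auto simp: star_branch_def contraction_def)
qed

lemma degree_le_mult_degree_if_redirect:
  assumes G: "sgraph V E" and W: "W \<subseteq> V" "finite W"
    and redirect: "\<And>w. w \<in> V \<Longrightarrow> E x w \<Longrightarrow> \<exists>y\<in>W. F x y \<and> x \<noteq> y \<and> (y = w \<or> E y w)"
    and common: "\<And>y. y \<in> V \<Longrightarrow> x \<noteq> y \<Longrightarrow> card {w \<in> V. E x w \<and> E y w} < s"
  shows "degree V E x \<le> s * degree W F x"
proof -
  define N where "N = {w \<in> V. E x w}"
  have "\<forall>w\<in>N. \<exists>y. y \<in> W \<and> F x y \<and> x \<noteq> y \<and> (y = w \<or> E y w)"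
    using redirect unfolding N_def by blast
  then obtain g where g: "\<And>w. w \<in> N \<Longrightarrow> g w \<in> W \<and> F x (g w) \<and> x \<noteq> g w \<and> (g w = w \<or> E (g w) w)"
    using bchoice by metis
  have "card N \<le> card (g ` N) * s"
  proof (rule card_le_mult_card_image)
    show "finite N"
      using sgraphD(1)[OF G] unfolding N_def by simp
    fix y assume "y \<in> g ` N"
    then obtain w where "w \<in> N" "y = g w"
      by blast
    then have y: "y \<in> V" "x \<noteq> y"
      using g[OF \<open>w \<in> N\<close>] W(1) by auto
    have "{w \<in> N. g w = y} \<subseteq> insert y {w \<in> V. E x w \<and> E y w}"
    proof
      fix w assume "w \<in> {w \<in> N. g w = y}"
      then have "w \<in> N" "g w = y" by simp_all
      then show "w \<in> insert y {w \<in> V. E x w \<and> E y w}"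
        using g[OF \<open>w \<in> N\<close>] unfolding N_def by auto
    qed
    then have "card {w \<in> N. g w = y} \<le> card (insert y {w \<in> V. E x w \<and> E y w})"
      using sgraphD(1)[OF G] by (intro card_mono) auto
    also have "\<dots> \<le> Suc (card {w \<in> V. E x w \<and> E y w})"
      by (rule card_insert_le_m1) simp_all
    also have "\<dots> \<le> s"
      using common[OF y] by simp
    finally show "card {w \<in> N. g w = y} \<le> s" .
  qed
  also have "card (g ` N) \<le> degree W F x"
    unfolding degree_def using g W(2) by (intro card_mono) auto
  finally show ?thesis
    unfolding degree_def N_def by (simp add: mult.commute)
qed

lemma star_contraction_redirect:
  assumes G: "sgraph V E" and x: "x \<in> H" and w: "w \<in> V" "E x w"
    and pq: "\<And>w. w \<in> V - H \<Longrightarrow> p w \<in> H \<and> q w \<in> H \<and> p w \<noteq> q w \<and> E w (p w) \<and> E w (q w)"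
  shows "\<exists>y\<in>H. contraction E (star_branch (V - H) p) H x y \<and> x \<noteq> y \<and> (y = w \<or> E y w)"
proof -
  let ?B = "star_branch (V - H) p"
  have F_intro: "contraction E ?B H a b"
    if "a \<in> H" "b \<in> H" "a \<noteq> b" "u \<in> ?B a" "v \<in> ?B b" "E u v" for a b u v
    using that unfolding contraction_def by blast
  have own: "a \<in> ?B a" and low: "v \<in> V - H \<Longrightarrow> v \<in> ?B (p v)" for a v
    unfolding star_branch_def by simp_all
  have "x \<noteq> w"
    using sgraphD(2)[OF G w(2)] .
  consider (high) "w \<in> H" | (other) "w \<in> V - H" "p w \<noteq> x" | (mine) "w \<in> V - H" "p w = x"
    using w(1) by blast
  then show ?thesis
  proof cases
    case high
    then show ?thesis
      using F_intro[OF x high \<open>x \<noteq> w\<close> own own w(2)] \<open>x \<noteq> w\<close> by blast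
  next
    case other
    then have "p w \<in> H" "E (p w) w"
      using pq[of w] sgraphD(3)[OF G] by auto
    then show ?thesis
      using F_intro[OF x \<open>p w \<in> H\<close> _ own low[OF other(1)] w(2)] other(2) by metis
  next
    case mine
    then have "q w \<in> H" "q w \<noteq> x" "E w (q w)" "E (q w) w"
      using pq[of w] sgraphD(3)[OF G] by auto
    moreover have "w \<in> ?B x"
      using low[OF mine(1)] mine(2) by simp
    ultimately show ?thesis
      using F_intro[OF x \<open>q w \<in> H\<close> _ \<open>w \<in> ?B x\<close> own] by metis
  qed
qed

lemma not_removable_high_neighbours:
  assumes "v \<in> V" and "degree V E v \<le> d" and "\<not> d_removable d V E v"
  obtains p q where "p \<noteq> q" and "p \<in> V" "q \<in> V" and "E v p" "E v q"
    and "d < degree V E p" "d < degree V E q"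
proof -
  have "2 \<le> card {w \<in> V. E v w \<and> d < degree V E w}"
    using assms unfolding d_removable_def by auto
  then obtain S where "S \<subseteq> {w \<in> V. E v w \<and> d < degree V E w}" "card S = 2"
    by (meson obtain_subset_with_card_n)
  then show ?thesis
    using that by (auto simp: card_2_iff)
qed

lemma no_removable_vertex_dense_minor:
  assumes G: "sgraph V E" and "V \<noteq> {}" and no_removable: "\<forall>v\<in>V. \<not> d_removable d V E v"
    and common: "\<And>a b. a \<in> V \<Longrightarrow> b \<in> V \<Longrightarrow> a \<noteq> b \<Longrightarrow> card {w \<in> V. E a w \<and> E b w} < s"
  obtains B W F where "shallow_minor_data 1 V E W B W F"
    and "(d + 1) * card W \<le> 2 * s * num_edges F"
proof -
  define H where "H = {v \<in> V. d < degree V E v}"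
  have HV: "H \<subseteq> V"
    unfolding H_def by blast
  have "\<exists>p q. p \<in> H \<and> q \<in> H \<and> p \<noteq> q \<and> E w p \<and> E w q" if "w \<in> V - H" for w
  proof -
    have "w \<in> V" "degree V E w \<le> d"
      using that unfolding H_def by auto
    then obtain a b where "a \<noteq> b" "a \<in> V" "b \<in> V" "E w a" "E w b"
        "d < degree V E a" "d < degree V E b"
      using no_removable by (metis not_removable_high_neighbours)
    then show ?thesis
      unfolding H_def by blast
  qed
  then obtain p q where
    pq: "\<And>w. w \<in> V - H \<Longrightarrow> p w \<in> H \<and> q w \<in> H \<and> p w \<noteq> q w \<and> E w (p w) \<and> E w (q w)"
    by metis
  have "H \<noteq> {}"
  proof -
    obtain v where "v \<in> V"
      using \<open>V \<noteq> {}\<close> by blast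
    then show ?thesis
      using pq[of v] by blast
  qed
  define B where "B = star_branch (V - H) p"
  define F where "F = contraction E B H"
  have "finite H"
    using sgraphD(1)[OF G] HV by (rule finite_subset[rotated])
  have "(d + 1) * card H \<le> (\<Sum>x\<in>H. degree V E x)"
    using sum_bounded_below[of H "d + 1" "degree V E"] by (simp add: H_def mult.commute)
  also have "\<dots> \<le> (\<Sum>x\<in>H. s * degree H F x)"
    unfolding F_def B_def using HV \<open>finite H\<close>
    by (intro sum_mono degree_le_mult_degree_if_redirect[OF G] star_contraction_redirect[OF G _ _ _ pq]
        common) auto
  also have "\<dots> = s * (\<Sum>x\<in>H. degree H F x)"
    by (simp add: sum_distrib_left)
  also have "\<dots> \<le> s * (2 * num_edges F)"
    unfolding F_def
    using sum_degree_le_twice_num_edges[OF sgraph_contraction[OF G \<open>finite H\<close>]] by simp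
  finally have "(d + 1) * card H \<le> 2 * s * num_edges F"
    by (simp add: mult.assoc mult.left_commute)
  moreover have "shallow_minor_data 1 V E H B H F"
    unfolding B_def F_def using pq by (intro star_contraction_shallow_minor[OF G HV \<open>H \<noteq> {}\<close>]) blast
  ultimately show ?thesis
    using that by blast
qed

lemma real_nat_floor_gt_minus_one: "x - 1 < real (nat \<lfloor>x\<rfloor>)"
  by linarith

theorem proposition3p2:
  fixes V :: "'a set" and E :: "'a \<Rightarrow> 'a \<Rightarrow> bool" and s :: nat
  assumes "sgraph V E" and "s \<ge> 2" and "K2s_free s V E"
  shows "strongly_degenerate (nat \<lfloor>2 * real s * nabla 1 V E\<rfloor>) V E"
proof -
  define d where "d = nat \<lfloor>2 * real s * nabla 1 V E\<rfloor>"
  have "\<exists>v\<in>V'. d_removable d V' E' v" if sub: "subgraph V' E' V E" and "V' \<noteq> {}" for V' E'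
  proof (rule ccontr)
    assume "\<not> (\<exists>v\<in>V'. d_removable d V' E' v)"
    then have no_removable: "\<forall>v\<in>V'. \<not> d_removable d V' E' v"
      by blast
    have G': "sgraph V' E'"
      using sub unfolding subgraph_def by blast
    obtain B W F where minor: "shallow_minor_data 1 V' E' W B W F"
      and dense: "(d + 1) * card W \<le> 2 * s * num_edges F"
      by (rule no_removable_vertex_dense_minor[OF G' \<open>V' \<noteq> {}\<close> no_removable
            K2s_free_common_neighbours[OF G' K2s_free_subgraph[OF sub assms(3)]]])
    have "real (d + 1) \<le> real (2 * s) * nabla 1 V E"
      using le_nabla_if_dense_minor[OF sgraphD(1)[OF assms(1)]
          shallow_minor_data_subgraph[OF sub minor] dense] .
    then show False
      using real_nat_floor_gt_minus_one[of "2 * real s * nabla 1 V E", folded d_def] by simp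
  qed
  then show ?thesis
    unfolding strongly_degenerate_def d_def by blast
qed

end
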